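(* Assume (H1) and that $\alpha$ is symmetric, and let $Q$ be a function on the interior $\mathcal{D}^\circ$ of $\mathcal{D}$ with $\nabla Q=q$. Let $F(s)=|\nabla Q(s)|^2-\Delta Q(s)$. Then (i) there is a constant $C\in\mathbb{R}$ with $F(s)\ge C$ for all $s\in\mathcal{D}^\circ$; (ii) $\inf\{F(s): s\in\mathcal{D}^\circ,\ |s|\ge R\}\to+\infty$ as $R\to\infty$.
   Context: $\gamma>0$, $\beta_i,\delta_i\in\mathbb{R}$, $\alpha_{ij}\in\mathbb{R}$; (H1): $\sum_{i,j}\alpha_{ij}z_iz_j>0$ for all $z\in(\mathbb{R}_+)^3\setminus\{0\}$. For $n\ge0$, $x\in[0,1]$: $U(n,x)=\beta_1-\delta_1-n(\alpha_{11}x^2+2\alpha_{21}x(1-x)+\alpha_{31}(1-x)^2)$, $V(n,x)=\beta_2-\delta_2-n(\alpha_{12}x^2+2\alpha_{22}x(1-x)+\alpha_{32}(1-x)^2)$, $W(n,x)=\beta_3-\delta_3-n(\alpha_{13}x^2+2\alpha_{23}x(1-x)+\alpha_{33}(1-x)^2)$. Generator on $(n,x)\in(0,\infty)\times(0,1)$: $\mathcal{L}f=b_N\partial_nf+b_X\partial_xf+\gamma n\,\partial^2_{nn}f+\frac{\gamma x(1-x)}{2n}\partial^2_{xx}f$, with $b_N(n,x)=n[x^2U+2x(1-x)V+(1-x)^2W]$ and $b_X(n,x)=(1-x)x^2(U-V)+x(1-x)^2(V-W)$. $u=\tan(\pi/\sqrt2)$, $\mathcal{D}=\{(s_1,s_2):s_2\ge0,\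 s_2\ge us_1\}$. $\psi(n,x)=\sqrt{2n/\gamma}\,(\cos\frac{\arccos(2x-1)}{\sqrt2},\sin\frac{\arccos(2x-1)}{\sqrt2})$, a bijection $(0,\infty)\times[0,1]\to\mathcal{D}\setminus\{(0,0)\}$. For $s\in\mathcal{D}^\circ$, $q(s):=-(\mathcal{L}\psi)(\psi^{-1}(s))$ (componentwise); when $\alpha$ is symmetric $q$ is a gradient field on $\mathcal{D}^\circ$ (e.g. in the neutral case $Q(s)=\ln|s|+\frac12\ln\sin(\sqrt2\theta(s))-(\beta-\delta-\frac{\alpha\gamma}{4}|s|^2)\frac{|s|^2}{4}$, $\theta(s)$ the polar angle). *)

theory Defs
  imports "HOL-Analysis.Analysis"
begin

text \<open>Ufun _ _ _ 1 = U, Ufun _ _ _ 2 = V, Ufun _ _ _ 3 = W.\<close>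
definition Ufun :: "(nat \<Rightarrow> real) \<Rightarrow> (nat \<Rightarrow> real) \<Rightarrow> (nat \<Rightarrow> nat \<Rightarrow> real) \<Rightarrow> nat \<Rightarrow> real \<Rightarrow> real \<Rightarrow> real" where
  "Ufun \<beta> \<delta> \<alpha> k n x =
     \<beta> k - \<delta> k - n * (\<alpha> 1 k * x\<^sup>2 + 2 * \<alpha> 2 k * x * (1 - x) + \<alpha> 3 k * (1 - x)\<^sup>2)"

definition bN :: "(nat \<Rightarrow> real) \<Rightarrow> (nat \<Rightarrow> real) \<Rightarrow> (nat \<Rightarrow> nat \<Rightarrow> real) \<Rightarrow> real \<Rightarrow> real \<Rightarrow> real" where
  "bN \<beta> \<delta> \<alpha> n x = n * (x\<^sup>2 * Ufun \<beta> \<delta> \<alpha> 1 n x + 2 * x * (1 - x) * Ufun \<beta> \<delta> \<alpha> 2 n x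
                          + (1 - x)\<^sup>2 * Ufun \<beta> \<delta> \<alpha> 3 n x)"

definition bX :: "(nat \<Rightarrow> real) \<Rightarrow> (nat \<Rightarrow> real) \<Rightarrow> (nat \<Rightarrow> nat \<Rightarrow> real) \<Rightarrow> real \<Rightarrow> real \<Rightarrow> real" where
  "bX \<beta> \<delta> \<alpha> n x = (1 - x) * x\<^sup>2 * (Ufun \<beta> \<delta> \<alpha> 1 n x - Ufun \<beta> \<delta> \<alpha> 2 n x)
                     + x * (1 - x)\<^sup>2 * (Ufun \<beta> \<delta> \<alpha> 2 n x - Ufun \<beta> \<delta> \<alpha> 3 n x)"

definition gen :: "real \<Rightarrow> (nat \<Rightarrow> real) \<Rightarrow> (nat \<Rightarrow> real) \<Rightarrow> (nat \<Rightarrow> nat \<Rightarrow> real)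
                    \<Rightarrow> (real \<Rightarrow> real \<Rightarrow> real) \<Rightarrow> real \<Rightarrow> real \<Rightarrow> real" where
  "gen \<gamma> \<beta> \<delta> \<alpha> f n x =
     bN \<beta> \<delta> \<alpha> n x * deriv (\<lambda>m. f m x) n
   + bX \<beta> \<delta> \<alpha> n x * deriv (\<lambda>y. f n y) x
   + \<gamma> * n * deriv (\<lambda>m. deriv (\<lambda>m'. f m' x) m) n
   + \<gamma> * x * (1 - x) / (2 * n) * deriv (\<lambda>y. deriv (\<lambda>y'. f n y') y) x"

definition uconst :: real where "uconst = tan (pi / sqrt 2)"

definition Dom :: "(real \<times> real) set" where
  "Dom = {(s1, s2). s2 \<ge> 0 \<and> s2 \<ge> uconst * s1}"

definition psi1 :: "real \<Rightarrow> real \<Rightarrow> real \<Rightarrow> real" where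
  "psi1 \<gamma> n x = sqrt (2 * n / \<gamma>) * cos (arccos (2 * x - 1) / sqrt 2)"

definition psi2 :: "real \<Rightarrow> real \<Rightarrow> real \<Rightarrow> real" where
  "psi2 \<gamma> n x = sqrt (2 * n / \<gamma>) * sin (arccos (2 * x - 1) / sqrt 2)"

definition psi :: "real \<Rightarrow> real \<times> real \<Rightarrow> real \<times> real" where
  "psi \<gamma> = (\<lambda>(n, x). (psi1 \<gamma> n x, psi2 \<gamma> n x))"

text \<open>q(s) = -(L psi)(psi^{-1}(s)), psi as a bijection (0,inf) x [0,1] -> D \ {0}.\<close>
definition qfield :: "real \<Rightarrow> (nat \<Rightarrow> real) \<Rightarrow> (nat \<Rightarrow> real) \<Rightarrow> (nat \<Rightarrow> nat \<Rightarrow> real)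
                       \<Rightarrow> real \<times> real \<Rightarrow> real \<times> real" where
  "qfield \<gamma> \<beta> \<delta> \<alpha> s =
     (let (n, x) = inv_into ({0<..} \<times> {0..1}) (psi \<gamma>) s
      in (- gen \<gamma> \<beta> \<delta> \<alpha> (psi1 \<gamma>) n x, - gen \<gamma> \<beta> \<delta> \<alpha> (psi2 \<gamma>) n x))"

definition grad2 :: "(real \<times> real \<Rightarrow> real) \<Rightarrow> real \<times> real \<Rightarrow> real \<times> real" where
  "grad2 Q = (\<lambda>(s1, s2). (deriv (\<lambda>u. Q (u, s2)) s1, deriv (\<lambda>u. Q (s1, u)) s2))"

definition lap2 :: "(real \<times> real \<Rightarrow> real) \<Rightarrow> real \<times> real \<Rightarrow> real" where
  "lap2 Q = (\<lambda>(s1, s2). deriv (\<lambda>t. deriv (\<lambda>u. Q (u, s2)) t) s1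
                      + deriv (\<lambda>t. deriv (\<lambda>u. Q (s1, u)) t) s2)"

definition Ffun :: "(real \<times> real \<Rightarrow> real) \<Rightarrow> real \<times> real \<Rightarrow> real" where
  "Ffun Q s = (norm (grad2 Q s))\<^sup>2 - lap2 Q s"

end

theory Submission
  imports Defs "HOL-Real_Asymp.Real_Asymp"
begin

text \<open>In polar coordinates \<open>s = r (cos \<theta>, sin \<theta>)\<close> the chart \<open>\<psi>\<close> reads \<open>n = \<gamma> r\<^sup>2 / 2\<close>,
  \<open>x = (1 + cos (\<surd>2 \<theta>)) / 2\<close>, and for symmetric \<open>\<alpha>\<close> the field \<open>q\<close> has radial component
  \<open>P = 1/r - (r/2) C(\<theta>) + (\<gamma> r\<^sup>3/4) A(\<theta>)\<close> and angular component
  \<open>T = \<surd>2 cot (\<surd>2 \<theta>) / (2r) - (r/4) C'(\<theta>) + (\<gamma> r\<^sup>3/16) A'(\<theta>)\<close>, where \<open>C\<close> and \<open>A\<close> are the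
  Bernstein-type quadratics in \<open>x\<close> built from \<open>\<beta> - \<delta>\<close> and from \<open>\<alpha>\<close>. Since \<open>|q|\<^sup>2 = P\<^sup>2 + T\<^sup>2\<close> and
  \<open>div q = \<partial>\<^sub>r P + P/r + \<partial>\<^sub>\<theta> T / r\<close>, one finds
  \<open>F = (r (\<gamma> r\<^sup>2 A/4 - C/2))\<^sup>2 + T\<^sup>2 + 1/r\<^sup>2 + 1/(r sin (\<surd>2 \<theta>))\<^sup>2 + O(r\<^sup>2)\<close>.
  By (H1) the quadratic form \<open>A\<close> is bounded below by some \<open>m > 0\<close>, so
  \<open>F(s) \<ge> (\<gamma> m)\<^sup>2/32 |s|\<^sup>6 - b |s|\<^sup>2 - c\<close>, which gives both claims.\<close>

section \<open>Polar coordinates and the polar frame\<close>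

definition polar :: "real \<times> real \<Rightarrow> real \<times> real" where
  "polar s = (norm s, arccos (fst s / norm s))"

lemma sqrt_one_minus_sq_div:
  fixes a b r :: real
  assumes "r > 0" "b \<ge> 0" "a\<^sup>2 + b\<^sup>2 = r\<^sup>2"
  shows "sqrt (1 - (a / r)\<^sup>2) = b / r"
proof -
  have "1 - (a / r)\<^sup>2 = (b / r)\<^sup>2"
    using assms by (simp add: field_simps)
  then show ?thesis using assms by simp
qed

lemma polar_upper_half_plane:
  fixes s :: "real \<times> real"
  assumes "snd s > 0"
  shows "norm s > 0" and "\<bar>fst s / norm s\<bar> < 1"
    and "cos (snd (polar s)) = fst s / norm s" and "sin (snd (polar s)) = snd s / norm s"
proof -
  obtain a b where s: "s = (a, b)" by fastforce
  have b: "b > 0" using assms s by simp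
  show r: "norm s > 0" using b s by (auto simp: zero_prod_def)
  have "a\<^sup>2 < (norm s)\<^sup>2" using b by (simp add: s norm_Pair)
  then have "\<bar>a\<bar> < norm s" using r by (metis abs_ge_zero abs_of_pos power2_less_imp_less power2_abs)
  then show lt: "\<bar>fst s / norm s\<bar> < 1" using r by (simp add: s divide_less_eq)
  show "cos (snd (polar s)) = fst s / norm s" using lt by (simp add: polar_def cos_arccos_abs)
  have "a\<^sup>2 + b\<^sup>2 = (norm s)\<^sup>2" by (simp add: s norm_Pair)
  then show "sin (snd (polar s)) = snd s / norm s"
    using lt r b by (simp add: polar_def sin_arccos_abs sqrt_one_minus_sq_div s)
qed

lemma polar_has_derivative:
  fixes s :: "real \<times> real"
  assumes "snd s > 0"
  shows "(polar has_derivative (\<lambda>h. ((fst s * fst h + snd s * snd h) / norm s,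
                                     (fst s * snd h - snd s * fst h) / (norm s)\<^sup>2))) (at s)"
proof -
  obtain a b where s: "s = (a, b)" by fastforce
  note pol = polar_upper_half_plane[OF assms]
  define r where "r = norm s"
  have r: "r > 0" and r2: "r\<^sup>2 = a\<^sup>2 + b\<^sup>2" and b: "b > 0"
    using pol assms by (simp_all add: r_def s norm_Pair)
  have "s \<noteq> 0" using r r_def by auto
  have dnorm: "(norm has_derivative (\<lambda>h. (a * fst h + b * snd h) / r)) (at s)"
    by (rule has_derivative_eq_rhs[OF has_derivative_norm[OF \<open>s \<noteq> 0\<close>]])
       (simp add: fun_eq_iff s r_def sgn_div_norm inner_prod_def split_beta divide_inverse algebra_simps)
  have dquot: "((\<lambda>z. fst z / norm z) has_derivative
      (\<lambda>h. b * (b * fst h - a * snd h) / r ^ 3)) (at s)"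
    by (rule has_derivative_eq_rhs, (rule derivative_intros dnorm)+)
       (use r r2 in \<open>auto simp: fun_eq_iff s r_def field_simps power2_eq_square power3_eq_cube\<close>)
  have sq: "sqrt (1 - (a / r)\<^sup>2) = b / r"
    using r r2 b by (simp add: sqrt_one_minus_sq_div)
  have darc: "(arccos has_real_derivative - r / b) (at (a / r))"
  proof -
    have "\<bar>a / r\<bar> < 1" using pol(2) by (simp add: s r_def)
    then have "- 1 < a / r" "a / r < 1" unfolding abs_less_iff by linarith+
    from DERIV_arccos[OF this] show ?thesis by (simp add: sq)
  qed
  have "((\<lambda>z. arccos (fst z / norm z)) has_derivative (\<lambda>h. (a * snd h - b * fst h) / r\<^sup>2)) (at s)"
    by (rule has_derivative_eq_rhs[OF DERIV_compose_FDERIV[OF _ dquot]])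
       (use darc r b in \<open>auto simp: s r_def fun_eq_iff field_simps power2_eq_square power3_eq_cube\<close>)
  then show ?thesis
    unfolding polar_def[abs_def] using has_derivative_Pair[OF dnorm] by (simp add: s r_def)
qed

definition frame_field ::
  "(real \<times> real \<Rightarrow> real) \<Rightarrow> (real \<times> real \<Rightarrow> real) \<Rightarrow> real \<times> real \<Rightarrow> real \<times> real" where
  "frame_field P T z = (P z * cos (snd z) - T z * sin (snd z), P z * sin (snd z) + T z * cos (snd z))"

lemma frame_field_has_derivative:
  assumes "(P has_derivative (\<lambda>k. Pr * fst k + Pt * snd k)) (at z)"
    and "(T has_derivative (\<lambda>k. Tr * fst k + Tt * snd k)) (at z)"
  shows "(frame_field P T has_derivative (\<lambda>k.
     ((Pr * fst k + Pt * snd k) * cos (snd z) - P z * sin (snd z) * snd k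
        - (Tr * fst k + Tt * snd k) * sin (snd z) - T z * cos (snd z) * snd k,
      (Pr * fst k + Pt * snd k) * sin (snd z) + P z * cos (snd z) * snd k
        + (Tr * fst k + Tt * snd k) * cos (snd z) - T z * sin (snd z) * snd k))) (at z)"
  unfolding frame_field_def[abs_def]
  by (rule has_derivative_eq_rhs, (rule derivative_intros assms)+) (auto simp: fun_eq_iff algebra_simps)

lemma frame_field_polar_divergence:
  fixes s :: "real \<times> real"
  assumes "snd s > 0"
    and "(P has_derivative (\<lambda>k. Pr * fst k + Pt * snd k)) (at (polar s))"
    and "(T has_derivative (\<lambda>k. Tr * fst k + Tt * snd k)) (at (polar s))"
  obtains E' where "(frame_field P T \<circ> polar has_derivative E') (at s)"
    and "fst (E' (1, 0)) + snd (E' (0, 1)) = Pr + P (polar s) / norm s + Tt / norm s"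
proof -
  note pol = polar_upper_half_plane[OF assms(1)]
  define r where "r = norm s"
  define c where "c = fst s / r"
  define d where "d = snd s / r"
  have r: "r > 0" using pol r_def by simp
  have cd: "c\<^sup>2 + d\<^sup>2 = 1"
    using r assms(1) by (simp add: c_def d_def r_def norm_prod_def power_divide add_divide_distrib[symmetric])
  have trig: "cos (snd (polar s)) = c" "sin (snd (polar s)) = d"
    using pol by (simp_all add: c_def d_def r_def)
  have sc: "fst s = c * r" "snd s = d * r" using r by (simp_all add: c_def d_def)
  note D = diff_chain_at[OF polar_has_derivative[OF assms(1)] frame_field_has_derivative[OF assms(2,3)]]
  show ?thesis
    by (rule that[OF D])
       (use r cd in \<open>simp add: trig r_def[symmetric] sc field_simps power2_eq_square, algebra\<close>)
qed

lemma has_derivative_partial_fst: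
  fixes f :: "real \<times> real \<Rightarrow> real"
  assumes "(f has_derivative f') (at (a, b))"
  shows "((\<lambda>u. f (u, b)) has_real_derivative f' (1, 0)) (at a)"
proof -
  have lin: "bounded_linear f'" using assms by (rule has_derivative_bounded_linear)
  have "((\<lambda>u. (u, b)) has_derivative (\<lambda>h. (h, 0))) (at a)"
    by (auto intro!: derivative_eq_intros)
  from has_derivative_compose[OF this assms]
  have "((\<lambda>u. f (u, b)) has_derivative (\<lambda>h. f' (h, 0))) (at a)" by simp
  moreover have "f' (h, 0) = f' (1, 0) * h" for h
    using linear_scale[OF bounded_linear.linear[OF lin], of h "(1, 0)"] by (simp add: mult.commute)
  then have "(\<lambda>h. f' (h, 0)) = (*) (f' (1, 0))" by (rule ext)
  ultimately show ?thesis by (simp add: has_field_derivative_def)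
qed

lemma has_derivative_partial_snd:
  fixes f :: "real \<times> real \<Rightarrow> real"
  assumes "(f has_derivative f') (at (a, b))"
  shows "((\<lambda>u. f (a, u)) has_real_derivative f' (0, 1)) (at b)"
proof -
  have lin: "bounded_linear f'" using assms by (rule has_derivative_bounded_linear)
  have "((\<lambda>u. (a, u)) has_derivative (\<lambda>h. (0, h))) (at b)"
    by (auto intro!: derivative_eq_intros)
  from has_derivative_compose[OF this assms]
  have "((\<lambda>u. f (a, u)) has_derivative (\<lambda>h. f' (0, h))) (at b)" by simp
  moreover have "f' (0, h) = f' (0, 1) * h" for h
    using linear_scale[OF bounded_linear.linear[OF lin], of h "(0, 1)"] by (simp add: mult.commute)
  then have "(\<lambda>h. f' (0, h)) = (*) (f' (0, 1))" by (rule ext)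
  ultimately show ?thesis by (simp add: has_field_derivative_def)
qed

lemma grad2_lap2_of_gradient_field:
  fixes Q :: "real \<times> real \<Rightarrow> real" and E :: "real \<times> real \<Rightarrow> real \<times> real"
  assumes U: "open U" "s \<in> U"
    and grad: "\<And>z. z \<in> U \<Longrightarrow> (Q has_derivative (\<lambda>h. E z \<bullet> h)) (at z)"
    and dE: "(E has_derivative E') (at s)"
  shows "grad2 Q s = E s" and "lap2 Q s = fst (E' (1, 0)) + snd (E' (0, 1))"
proof -
  have d1: "deriv (\<lambda>u. Q (u, b)) a = fst (E (a, b))" if "(a, b) \<in> U" for a b
    using has_derivative_partial_fst[OF grad[OF that]] by (simp add: DERIV_imp_deriv inner_prod_def)
  have d2: "deriv (\<lambda>u. Q (a, u)) b = snd (E (a, b))" if "(a, b) \<in> U" for a b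
    using has_derivative_partial_snd[OF grad[OF that]] by (simp add: DERIV_imp_deriv inner_prod_def)
  obtain a b where s: "s = (a, b)" by fastforce
  show "grad2 Q s = E s" using d1 d2 U by (simp add: grad2_def s)
  have line_open: "open ((\<lambda>t. (t, b)) -` U)" "open (Pair a -` U)"
    by (intro continuous_open_vimage U(1) continuous_intros)+
  have "((\<lambda>t. deriv (\<lambda>u. Q (u, b)) t) has_real_derivative fst (E' (1, 0))) (at a)"
  proof (rule has_field_derivative_transform_within_open[OF _ line_open(1)])
    show "((\<lambda>t. fst (E (t, b))) has_real_derivative fst (E' (1, 0))) (at a)"
      using has_derivative_partial_fst[OF has_derivative_fst[OF dE[unfolded s]]] .
    show "a \<in> (\<lambda>t. (t, b)) -` U" using U by (simp add: s)
    show "fst (E (t, b)) = deriv (\<lambda>u. Q (u, b)) t" if "t \<in> (\<lambda>t. (t, b)) -` U" for t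
      using d1[of t b] that by simp
  qed
  moreover have "((\<lambda>t. deriv (\<lambda>u. Q (a, u)) t) has_real_derivative snd (E' (0, 1))) (at b)"
  proof (rule has_field_derivative_transform_within_open[OF _ line_open(2)])
    show "((\<lambda>t. snd (E (a, t))) has_real_derivative snd (E' (0, 1))) (at b)"
      using has_derivative_partial_snd[OF has_derivative_snd[OF dE[unfolded s]]] .
    show "b \<in> Pair a -` U" using U by (simp add: s)
    show "snd (E (a, t)) = deriv (\<lambda>u. Q (a, u)) t" if "t \<in> Pair a -` U" for t
      using d2[of a t] that by simp
  qed
  ultimately show "lap2 Q s = fst (E' (1, 0)) + snd (E' (0, 1))"
    by (simp add: lap2_def s DERIV_imp_deriv)
qed


section \<open>The domain and the chart \<open>\<psi>\<close>\<close>

lemma pi_div_sqrt2_bounds: "pi / 2 < pi / sqrt 2" "pi / sqrt 2 < pi"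
proof -
  have "1 < sqrt (2::real)" by (rule real_less_rsqrt) simp
  then show "pi / 2 < pi / sqrt 2" "pi / sqrt 2 < pi"
    using sqrt2_less_2 by (intro divide_strict_left_mono, auto simp: divide_less_eq)
qed

lemma cos_pi_div_sqrt2_neg: "cos (pi / sqrt 2) < 0"
proof -
  have "0 < cos (pi - pi / sqrt 2)"
    by (rule cos_gt_zero_pi) (use pi_div_sqrt2_bounds in linarith)+
  then show ?thesis by simp
qed

lemma uconst_eq: "uconst = sin (pi / sqrt 2) / cos (pi / sqrt 2)"
  unfolding uconst_def tan_def ..

lemma mem_interior_Dom: "s \<in> interior Dom \<longleftrightarrow> 0 < snd s \<and> uconst * fst s < snd s"
proof
  assume "s \<in> interior Dom"
  then obtain e where e: "e > 0" "ball s e \<subseteq> Dom" by (meson mem_interior)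
  have "(fst s, snd s - e / 2) \<in> ball s e"
    using e by (cases s) (simp add: dist_Pair_Pair dist_real_def)
  then have "(fst s, snd s - e / 2) \<in> Dom" using e by blast
  then show "0 < snd s \<and> uconst * fst s < snd s" using e unfolding Dom_def by auto
next
  let ?O = "{s :: real \<times> real. 0 < snd s \<and> uconst * fst s < snd s}"
  have "open ?O"
    by (intro open_Collect_conj open_Collect_less continuous_intros)
  moreover have "?O \<subseteq> Dom" unfolding Dom_def by auto
  ultimately have "?O \<subseteq> interior Dom" using interior_maximal by blast
  then show "0 < snd s \<and> uconst * fst s < snd s \<Longrightarrow> s \<in> interior Dom" by blast
qed

lemma polar_angle_interior_Dom:
  assumes "s \<in> interior Dom"
  shows "0 < snd (polar s)" and "snd (polar s) < pi / sqrt 2"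
proof -
  have s2: "0 < snd s" and u: "uconst * fst s < snd s" using assms mem_interior_Dom by auto
  note pol = polar_upper_half_plane[OF s2]
  define \<theta> where "\<theta> = snd (polar s)"
  have "- 1 < fst s / norm s" "fst s / norm s < 1" using pol(2) unfolding abs_less_iff by linarith+
  then have \<theta>: "0 < \<theta>" "\<theta> < pi" using arccos_lt_bounded by (simp_all add: \<theta>_def polar_def)
  then show "0 < snd (polar s)" by (simp add: \<theta>_def)
  show "snd (polar s) < pi / sqrt 2"
  proof (rule ccontr)
    assume "\<not> ?thesis"
    then have "0 \<le> sin (\<theta> - pi / sqrt 2)"
      using \<theta> pi_div_sqrt2_bounds by (intro sin_ge_zero) (auto simp: \<theta>_def)
    moreover have "sin (\<theta> - pi / sqrt 2)
        = (snd s * cos (pi / sqrt 2) - fst s * sin (pi / sqrt 2)) / norm s"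
      using pol by (simp add: sin_diff \<theta>_def diff_divide_distrib)
    ultimately have "snd s * cos (pi / sqrt 2) \<ge> fst s * sin (pi / sqrt 2)"
      using pol(1) by (simp add: zero_le_divide_iff)
    then have "snd s \<le> fst s * uconst"
      using cos_pi_div_sqrt2_neg by (simp add: uconst_eq le_divide_eq)
    then show False using u by (simp add: mult.commute)
  qed
qed

text \<open>The \<open>x\<close>-coordinate of \<open>\<psi>\<^sup>-\<^sup>1\<close> as a function of the polar angle: \<open>arccos (2x - 1) = \<surd>2 \<theta>\<close>.\<close>
definition xcoord :: "real \<Rightarrow> real" where
  "xcoord \<theta> = (1 + cos (sqrt 2 * \<theta>)) / 2"

lemma arccos_xcoord:
  assumes "0 \<le> \<theta>" "\<theta> \<le> pi / sqrt 2"
  shows "arccos (2 * xcoord \<theta> - 1) = sqrt 2 * \<theta>"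
proof -
  have "sqrt 2 * \<theta> \<le> pi" using assms(2) by (simp add: le_divide_eq mult.commute)
  moreover have "2 * xcoord \<theta> - 1 = cos (sqrt 2 * \<theta>)" by (simp add: xcoord_def field_simps)
  ultimately show ?thesis using assms(1) by (simp add: arccos_cos)
qed

lemma xcoord_bounds:
  assumes "0 < \<theta>" "\<theta> < pi / sqrt 2"
  shows "0 < xcoord \<theta>" "xcoord \<theta> < 1"
proof -
  have "0 < sqrt 2 * \<theta>" "sqrt 2 * \<theta> < pi"
    using assms by (simp_all add: less_divide_eq mult.commute)
  then have "- 1 < cos (sqrt 2 * \<theta>)" "cos (sqrt 2 * \<theta>) < 1"
    using cos_monotone_0_pi[of 0 "sqrt 2 * \<theta>"] cos_monotone_0_pi[of "sqrt 2 * \<theta>" pi] by simp_all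
  then show "0 < xcoord \<theta>" "xcoord \<theta> < 1" by (simp_all add: xcoord_def)
qed

lemma psi_eq: "psi \<gamma> (n, x) = sqrt (2 * n / \<gamma>) *\<^sub>R
    (cos (arccos (2 * x - 1) / sqrt 2), sin (arccos (2 * x - 1) / sqrt 2))"
  by (simp add: psi_def psi1_def psi2_def)

lemma inj_on_psi:
  assumes "\<gamma> > 0"
  shows "inj_on (psi \<gamma>) ({0<..} \<times> {0..1})"
proof (rule inj_onI)
  fix p q
  assume "p \<in> {0<..} \<times> {0..1}" "q \<in> {0<..} \<times> {0..1}" and pq: "psi \<gamma> p = psi \<gamma> q"
  then obtain n x m y where p: "p = (n, x)" and q: "q = (m, y)"
    and n: "0 < n" "0 \<le> x" "x \<le> 1" and m: "0 < m" "0 \<le> y" "y \<le> 1"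
    by (cases p, cases q) auto
  have eq: "psi \<gamma> (n, x) = psi \<gamma> (m, y)" using pq p q by simp
  define \<phi> where "\<phi> x = arccos (2 * x - 1) / sqrt 2" for x
  have \<phi>: "0 \<le> \<phi> x" "\<phi> x \<le> pi" if "0 \<le> x" "x \<le> 1" for x
  proof -
    have a: "0 \<le> arccos (2 * x - 1)" "arccos (2 * x - 1) \<le> pi"
      using that by (simp_all add: arccos_lbound arccos_ubound)
    moreover have "arccos (2 * x - 1) / sqrt 2 \<le> arccos (2 * x - 1)"
      using a by (simp add: divide_le_eq mult_le_cancel_left1)
    ultimately show "0 \<le> \<phi> x" "\<phi> x \<le> pi" by (simp_all add: \<phi>_def)
  qed
  have norm_psi: "norm (psi \<gamma> (n, x)) = \<bar>sqrt (2 * n / \<gamma>)\<bar>" for n x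
    unfolding psi_eq norm_scaleR by (simp add: norm_Pair)
  have "\<bar>sqrt (2 * n / \<gamma>)\<bar> = \<bar>sqrt (2 * m / \<gamma>)\<bar>"
    using norm_psi[of n x] norm_psi[of m y] eq by simp
  then have "n = m" using assms n m by simp
  moreover from this have "(cos (\<phi> x), sin (\<phi> x)) = (cos (\<phi> y), sin (\<phi> y))"
    using eq n assms unfolding psi_eq \<phi>_def[symmetric] by simp
  then have "cos (\<phi> x) = cos (\<phi> y)" by simp
  with \<phi>[of x] \<phi>[of y] n m have "\<phi> x = \<phi> y" using cos_inj_pi by blast
  then have "arccos (2 * x - 1) = arccos (2 * y - 1)" by (simp add: \<phi>_def)
  then have "cos (arccos (2 * x - 1)) = cos (arccos (2 * y - 1))" by simp
  then have "2 * x - 1 = 2 * y - 1" using n m by simp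
  ultimately show "p = q" by (simp add: p q)
qed

lemma inv_psi_interior_Dom:
  assumes "\<gamma> > 0" "s \<in> interior Dom"
  shows "inv_into ({0<..} \<times> {0..1}) (psi \<gamma>) s = (\<gamma> * (norm s)\<^sup>2 / 2, xcoord (snd (polar s)))"
proof (rule inv_into_f_eq[OF inj_on_psi[OF assms(1)]])
  have s2: "0 < snd s" using assms(2) mem_interior_Dom by auto
  note pol = polar_upper_half_plane[OF s2]
  note \<theta> = polar_angle_interior_Dom[OF assms(2)]
  show "(\<gamma> * (norm s)\<^sup>2 / 2, xcoord (snd (polar s))) \<in> {0<..} \<times> {0..1}"
    using assms(1) pol(1) xcoord_bounds[OF \<theta>] by simp
  show "psi \<gamma> (\<gamma> * (norm s)\<^sup>2 / 2, xcoord (snd (polar s))) = s"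
    using assms(1) pol \<theta> by (simp add: psi_eq arccos_xcoord)
qed


section \<open>The generator applied to \<open>\<psi>\<close>\<close>

definition sin_arc :: "real \<Rightarrow> real" where
  "sin_arc y = sqrt (1 - (2 * y - 1)\<^sup>2)"

definition cphi :: "real \<Rightarrow> real" where
  "cphi y = cos (arccos (2 * y - 1) / sqrt 2)"

definition sphi :: "real \<Rightarrow> real" where
  "sphi y = sin (arccos (2 * y - 1) / sqrt 2)"

definition cphi' :: "real \<Rightarrow> real" where
  "cphi' y = sqrt 2 * sphi y / sin_arc y"

definition cphi'' :: "real \<Rightarrow> real" where
  "cphi'' y = - 2 * cphi y / (sin_arc y)\<^sup>2 + 2 * sqrt 2 * (2 * y - 1) * sphi y / (sin_arc y) ^ 3"

definition sphi' :: "real \<Rightarrow> real" where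
  "sphi' y = - sqrt 2 * cphi y / sin_arc y"

definition sphi'' :: "real \<Rightarrow> real" where
  "sphi'' y = - 2 * sphi y / (sin_arc y)\<^sup>2 - 2 * sqrt 2 * (2 * y - 1) * cphi y / (sin_arc y) ^ 3"

lemma sin_arc_pos:
  assumes "0 < y" "y < 1"
  shows "sin_arc y > 0"
proof -
  have "(2 * y - 1)\<^sup>2 < 1" using assms by (simp add: abs_square_less_1)
  then show ?thesis by (simp add: sin_arc_def)
qed

lemma sin_arc_has_derivative:
  assumes "0 < y" "y < 1"
  shows "(sin_arc has_real_derivative - 2 * (2 * y - 1) / sin_arc y) (at y)"
proof -
  have pos: "0 < 1 - (2 * y - 1)\<^sup>2" using sin_arc_pos[OF assms] by (simp add: sin_arc_def)
  have "((\<lambda>y. 1 - (2 * y - 1)\<^sup>2) has_real_derivative - (2 * (2 * y - 1) * 2)) (at y)"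
    by (auto intro!: derivative_eq_intros)
  from DERIV_chain2[OF DERIV_real_sqrt[OF pos] this] show ?thesis
    unfolding sin_arc_def[abs_def] by (rule DERIV_cong) (use pos in \<open>simp add: field_simps\<close>)
qed

lemma arccos_affine_has_derivative:
  assumes "0 < y" "y < 1"
  shows "((\<lambda>y. arccos (2 * y - 1) / sqrt 2) has_real_derivative - sqrt 2 / sin_arc y) (at y)"
proof -
  have range: "- 1 < 2 * y - 1" "2 * y - 1 < 1" using assms by auto
  have "((\<lambda>y. 2 * y - 1) has_real_derivative 2) (at y)"
    by (auto intro!: derivative_eq_intros)
  from DERIV_chain2[OF DERIV_arccos[OF range] this]
  have "((\<lambda>y. arccos (2 * y - 1)) has_real_derivative - 2 / sin_arc y) (at y)"
    unfolding sin_arc_def by (rule DERIV_cong) (simp add: field_simps)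
  from DERIV_cdivide[OF this, of "sqrt 2"] show ?thesis
    by (rule DERIV_cong) (use sin_arc_pos[OF assms] in \<open>simp add: field_simps\<close>)
qed

lemma cphi_has_derivative:
  assumes "0 < y" "y < 1"
  shows "(cphi has_real_derivative cphi' y) (at y)"
  unfolding cphi_def[abs_def]
  by (rule DERIV_cong[OF DERIV_chain2[OF DERIV_cos arccos_affine_has_derivative[OF assms]]])
     (simp add: cphi'_def sphi_def)

lemma sphi_has_derivative:
  assumes "0 < y" "y < 1"
  shows "(sphi has_real_derivative sphi' y) (at y)"
  unfolding sphi_def[abs_def]
  by (rule DERIV_cong[OF DERIV_chain2[OF DERIV_sin arccos_affine_has_derivative[OF assms]]])
     (simp add: sphi'_def cphi_def)

lemma cphi'_has_derivative:
  assumes "0 < y" "y < 1"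
  shows "(cphi' has_real_derivative cphi'' y) (at y)"
  unfolding cphi'_def[abs_def]
  by (rule DERIV_cong, (rule derivative_intros sphi_has_derivative sin_arc_has_derivative assms)+)
     (use sin_arc_pos[OF assms] in \<open>auto simp: cphi''_def sphi'_def field_simps power2_eq_square power3_eq_cube\<close>)

lemma sphi'_has_derivative:
  assumes "0 < y" "y < 1"
  shows "(sphi' has_real_derivative sphi'' y) (at y)"
  unfolding sphi'_def[abs_def]
  by (rule DERIV_cong, (rule derivative_intros cphi_has_derivative sin_arc_has_derivative assms)+)
     (use sin_arc_pos[OF assms] in \<open>auto simp: sphi''_def cphi'_def field_simps power2_eq_square power3_eq_cube\<close>)

definition radius :: "real \<Rightarrow> real \<Rightarrow> real" where
  "radius \<gamma> n = sqrt (2 * n / \<gamma>)"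

lemma radius_has_derivative:
  assumes "\<gamma> > 0" "n > 0"
  shows "(radius \<gamma> has_real_derivative 1 / (\<gamma> * radius \<gamma> n)) (at n)"
proof -
  have pos: "0 < 2 * n / \<gamma>" using assms by simp
  have "((\<lambda>n. 2 * n / \<gamma>) has_real_derivative 2 / \<gamma>) (at n)"
    using assms by (auto intro!: derivative_eq_intros)
  from DERIV_chain2[OF DERIV_real_sqrt[OF pos] this] show ?thesis
    unfolding radius_def[abs_def] by (rule DERIV_cong) (use assms in \<open>simp add: field_simps\<close>)
qed

lemma inverse_radius_has_derivative:
  assumes "\<gamma> > 0" "n > 0"
  shows "((\<lambda>n. 1 / (\<gamma> * radius \<gamma> n)) has_real_derivative - 1 / (\<gamma>\<^sup>2 * (radius \<gamma> n) ^ 3)) (at n)"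
proof -
  have R: "radius \<gamma> n > 0" using assms by (simp add: radius_def)
  have "((\<lambda>n. 1 / (\<gamma> * radius \<gamma> n)) has_real_derivative
      (0 * (\<gamma> * radius \<gamma> n) - 1 * (\<gamma> * (1 / (\<gamma> * radius \<gamma> n))))
        / ((\<gamma> * radius \<gamma> n) * (\<gamma> * radius \<gamma> n))) (at n)"
    by (rule DERIV_divide[OF DERIV_const DERIV_cmult[OF radius_has_derivative[OF assms]]])
       (use R assms in simp)
  then show ?thesis
    by (rule DERIV_cong) (use R assms in \<open>simp add: field_simps power2_eq_square power3_eq_cube\<close>)
qed

lemma gen_separable:
  fixes H H' H'' :: "real \<Rightarrow> real"
  assumes \<gamma>: "\<gamma> > 0" and n: "n > 0" and x: "0 < x" "x < 1"
    and dH: "\<And>y. 0 < y \<Longrightarrow> y < 1 \<Longrightarrow> (H has_real_derivative H' y) (at y)"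
    and dH': "\<And>y. 0 < y \<Longrightarrow> y < 1 \<Longrightarrow> (H' has_real_derivative H'' y) (at y)"
  shows "gen \<gamma> \<beta> \<delta> \<alpha> (\<lambda>m y. radius \<gamma> m * H y) n x =
     bN \<beta> \<delta> \<alpha> n x * (1 / (\<gamma> * radius \<gamma> n) * H x) + bX \<beta> \<delta> \<alpha> n x * (radius \<gamma> n * H' x)
     + \<gamma> * n * (- 1 / (\<gamma>\<^sup>2 * (radius \<gamma> n) ^ 3) * H x)
     + \<gamma> * x * (1 - x) / (2 * n) * (radius \<gamma> n * H'' x)"
proof -
  have d1: "deriv (\<lambda>m. radius \<gamma> m * H x) m = 1 / (\<gamma> * radius \<gamma> m) * H x" if "m > 0" for m
    by (rule DERIV_imp_deriv, rule DERIV_cmult_right, rule radius_has_derivative) (use \<gamma> that in auto)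
  have d2: "deriv (\<lambda>m. deriv (\<lambda>m'. radius \<gamma> m' * H x) m) n = - 1 / (\<gamma>\<^sup>2 * (radius \<gamma> n) ^ 3) * H x"
  proof (rule DERIV_imp_deriv)
    have "((\<lambda>m. 1 / (\<gamma> * radius \<gamma> m) * H x) has_real_derivative
        - 1 / (\<gamma>\<^sup>2 * (radius \<gamma> n) ^ 3) * H x) (at n)"
      by (rule DERIV_cmult_right, rule inverse_radius_has_derivative) (use \<gamma> n in auto)
    then show "((\<lambda>m. deriv (\<lambda>m'. radius \<gamma> m' * H x) m) has_real_derivative
        - 1 / (\<gamma>\<^sup>2 * (radius \<gamma> n) ^ 3) * H x) (at n)"
      by (rule has_field_derivative_transform_within_open[where S="{0<..}"]) (use n d1 in auto)
  qed
  have d3: "deriv (\<lambda>y. radius \<gamma> n * H y) y = radius \<gamma> n * H' y" if "0 < y" "y < 1" for y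
    by (rule DERIV_imp_deriv, rule DERIV_cmult, rule dH) (use that in auto)
  have d4: "deriv (\<lambda>y. deriv (\<lambda>y'. radius \<gamma> n * H y') y) x = radius \<gamma> n * H'' x"
  proof (rule DERIV_imp_deriv)
    have "((\<lambda>y. radius \<gamma> n * H' y) has_real_derivative radius \<gamma> n * H'' x) (at x)"
      by (rule DERIV_cmult, rule dH') (use x in auto)
    then show "((\<lambda>y. deriv (\<lambda>y'. radius \<gamma> n * H y') y) has_real_derivative radius \<gamma> n * H'' x) (at x)"
      by (rule has_field_derivative_transform_within_open[where S="{0<..<1}"]) (use x d3 in auto)
  qed
  show ?thesis unfolding gen_def d2 d4 d1[OF n] d3[OF x] ..
qed


section \<open>The field \<open>q\<close> in polar coordinates\<close>

definition bern :: "(nat \<Rightarrow> real) \<Rightarrow> real \<Rightarrow> real" where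
  "bern c x = c 1 * x\<^sup>2 + c 2 * (2 * x * (1 - x)) + c 3 * (1 - x)\<^sup>2"

definition bern' :: "(nat \<Rightarrow> real) \<Rightarrow> real \<Rightarrow> real" where
  "bern' c x = c 1 * (2 * x) + c 2 * (2 - 4 * x) - c 3 * (2 * (1 - x))"

definition bern'' :: "(nat \<Rightarrow> real) \<Rightarrow> real" where
  "bern'' c = 2 * c 1 - 4 * c 2 + 2 * c 3"

definition qform :: "(nat \<Rightarrow> nat \<Rightarrow> real) \<Rightarrow> real \<Rightarrow> real" where
  "qform a x = bern (\<lambda>k. bern (\<lambda>i. a i k) x) x"

definition qform' :: "(nat \<Rightarrow> nat \<Rightarrow> real) \<Rightarrow> real \<Rightarrow> real" where
  "qform' a x = bern' (\<lambda>k. bern (\<lambda>i. a i k) x) x + bern (\<lambda>k. bern' (\<lambda>i. a i k) x) x"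

definition qform'' :: "(nat \<Rightarrow> nat \<Rightarrow> real) \<Rightarrow> real \<Rightarrow> real" where
  "qform'' a x = bern'' (\<lambda>k. bern (\<lambda>i. a i k) x) + 2 * bern' (\<lambda>k. bern' (\<lambda>i. a i k) x) x
     + bern (\<lambda>k. bern'' (\<lambda>i. a i k)) x"

lemma bern_has_derivative: "(bern c has_real_derivative bern' c x) (at x)"
  unfolding bern_def[abs_def] bern'_def
  by (rule DERIV_cong, (rule derivative_intros)+) (simp add: algebra_simps)

lemma bern'_has_derivative: "(bern' c has_real_derivative bern'' c) (at x)"
  unfolding bern'_def[abs_def] bern''_def
  by (rule DERIV_cong, (rule derivative_intros)+) (simp add: algebra_simps)

lemma qform_has_derivative: "(qform a has_real_derivative qform' a x) (at x)"
  unfolding qform_def[abs_def] qform'_def bern_def bern'_def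
  by (rule DERIV_cong, (rule derivative_intros)+) (simp add: algebra_simps)

lemma qform'_has_derivative: "(qform' a has_real_derivative qform'' a x) (at x)"
  unfolding qform'_def[abs_def] qform''_def bern_def bern'_def bern''_def
  by (rule DERIV_cong, (rule derivative_intros)+) (simp add: algebra_simps)

lemma qform_eq_quadratic_form:
  "qform a x = (\<Sum>i=1..3. \<Sum>j=1..3. a i j * z i * z j)"
  if "z = (\<lambda>i. if i = 1 then x\<^sup>2 else if i = 2 then 2 * x * (1 - x) else (1 - x)\<^sup>2)"
proof -
  have "{1..3::nat} = {1, 2, 3}" by auto
  then show ?thesis by (simp add: that qform_def bern_def algebra_simps)
qed

lemma bN_eq: "bN \<beta> \<delta> \<alpha> n x = n * bern (\<lambda>k. \<beta> k - \<delta> k) x - n\<^sup>2 * qform \<alpha> x"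
  unfolding bN_def Ufun_def bern_def qform_def by (simp add: power2_eq_square algebra_simps)

lemma bX_eq:
  assumes "\<alpha> 1 2 = \<alpha> 2 1" "\<alpha> 1 3 = \<alpha> 3 1" "\<alpha> 2 3 = \<alpha> 3 2"
  shows "bX \<beta> \<delta> \<alpha> n x = x * (1 - x) * (bern' (\<lambda>k. \<beta> k - \<delta> k) x / 2 - n * qform' \<alpha> x / 4)"
  unfolding bX_def Ufun_def bern_def bern'_def qform'_def using assms
  by (simp add: power2_eq_square field_simps)

definition xcoord' :: "real \<Rightarrow> real" where
  "xcoord' \<theta> = - (sqrt 2 / 2) * sin (sqrt 2 * \<theta>)"

definition xcoord'' :: "real \<Rightarrow> real" where
  "xcoord'' \<theta> = - cos (sqrt 2 * \<theta>)"

lemma xcoord_has_derivative: "(xcoord has_real_derivative xcoord' \<theta>) (at \<theta>)"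
  unfolding xcoord_def[abs_def] xcoord'_def
  by (auto intro!: derivative_eq_intros)

lemma xcoord'_has_derivative: "(xcoord' has_real_derivative xcoord'' \<theta>) (at \<theta>)"
  unfolding xcoord'_def[abs_def] xcoord''_def
  by (rule DERIV_cong, (rule derivative_intros)+) (simp add: algebra_simps)

lemma comp_xcoord_has_derivative:
  assumes "\<And>x. (f has_real_derivative f' x) (at x)" and "\<And>x. (f' has_real_derivative f'' x) (at x)"
  shows "((\<lambda>t. f (xcoord t)) has_real_derivative f' (xcoord \<theta>) * xcoord' \<theta>) (at \<theta>)"
    and "((\<lambda>t. f' (xcoord t) * xcoord' t) has_real_derivative
           f'' (xcoord \<theta>) * (xcoord' \<theta>)\<^sup>2 + f' (xcoord \<theta>) * xcoord'' \<theta>) (at \<theta>)"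
proof -
  show "((\<lambda>t. f (xcoord t)) has_real_derivative f' (xcoord \<theta>) * xcoord' \<theta>) (at \<theta>)"
    using DERIV_chain2[OF assms(1) xcoord_has_derivative] .
  show "((\<lambda>t. f' (xcoord t) * xcoord' t) has_real_derivative
           f'' (xcoord \<theta>) * (xcoord' \<theta>)\<^sup>2 + f' (xcoord \<theta>) * xcoord'' \<theta>) (at \<theta>)"
    by (rule DERIV_cong[OF DERIV_mult[OF DERIV_chain2[OF assms(2) xcoord_has_derivative]
          xcoord'_has_derivative]])
       (simp add: power2_eq_square algebra_simps)
qed

definition cang :: "(nat \<Rightarrow> real) \<Rightarrow> real \<Rightarrow> real" where
  "cang c \<theta> = bern c (xcoord \<theta>)"

definition cang' :: "(nat \<Rightarrow> real) \<Rightarrow> real \<Rightarrow> real" where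
  "cang' c \<theta> = bern' c (xcoord \<theta>) * xcoord' \<theta>"

definition cang'' :: "(nat \<Rightarrow> real) \<Rightarrow> real \<Rightarrow> real" where
  "cang'' c \<theta> = bern'' c * (xcoord' \<theta>)\<^sup>2 + bern' c (xcoord \<theta>) * xcoord'' \<theta>"

definition aang :: "(nat \<Rightarrow> nat \<Rightarrow> real) \<Rightarrow> real \<Rightarrow> real" where
  "aang a \<theta> = qform a (xcoord \<theta>)"

definition aang' :: "(nat \<Rightarrow> nat \<Rightarrow> real) \<Rightarrow> real \<Rightarrow> real" where
  "aang' a \<theta> = qform' a (xcoord \<theta>) * xcoord' \<theta>"

definition aang'' :: "(nat \<Rightarrow> nat \<Rightarrow> real) \<Rightarrow> real \<Rightarrow> real" where
  "aang'' a \<theta> = qform'' a (xcoord \<theta>) * (xcoord' \<theta>)\<^sup>2 + qform' a (xcoord \<theta>) * xcoord'' \<theta>"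

lemma cang_has_derivative: "(cang c has_real_derivative cang' c \<theta>) (at \<theta>)"
  unfolding cang_def[abs_def] cang'_def
  using comp_xcoord_has_derivative(1)[OF bern_has_derivative bern'_has_derivative] .

lemma cang'_has_derivative: "(cang' c has_real_derivative cang'' c \<theta>) (at \<theta>)"
  unfolding cang'_def[abs_def] cang''_def
  using comp_xcoord_has_derivative(2)[OF bern_has_derivative bern'_has_derivative] .

lemma aang_has_derivative: "(aang a has_real_derivative aang' a \<theta>) (at \<theta>)"
  unfolding aang_def[abs_def] aang'_def
  using comp_xcoord_has_derivative(1)[OF qform_has_derivative qform'_has_derivative] .

lemma aang'_has_derivative: "(aang' a has_real_derivative aang'' a \<theta>) (at \<theta>)"
  unfolding aang'_def[abs_def] aang''_def
  using comp_xcoord_has_derivative(2)[OF qform_has_derivative qform'_has_derivative] .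


definition q_rad :: "real \<Rightarrow> (nat \<Rightarrow> real) \<Rightarrow> (nat \<Rightarrow> nat \<Rightarrow> real) \<Rightarrow> real \<times> real \<Rightarrow> real" where
  "q_rad \<gamma> c a z = 1 / fst z - (fst z / 2) * cang c (snd z) + (\<gamma> * fst z ^ 3 / 4) * aang a (snd z)"

definition q_ang :: "real \<Rightarrow> (nat \<Rightarrow> real) \<Rightarrow> (nat \<Rightarrow> nat \<Rightarrow> real) \<Rightarrow> real \<times> real \<Rightarrow> real" where
  "q_ang \<gamma> c a z = (sqrt 2 / (2 * fst z)) * cot (sqrt 2 * snd z) - (fst z / 4) * cang' c (snd z)
      + (\<gamma> * fst z ^ 3 / 16) * aang' a (snd z)"

lemma has_derivative_fst_comp:
  assumes "(f has_real_derivative f') (at a)"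
  shows "((\<lambda>z. f (fst z)) has_derivative (\<lambda>v. f' * fst v)) (at (a, b))"
proof -
  have "(f has_real_derivative f') (at (fst (a, b)))" using assms by simp
  from DERIV_compose_FDERIV[OF this has_derivative_fst[OF has_derivative_ident]] show ?thesis
    by (simp add: mult.commute)
qed

lemma has_derivative_snd_comp:
  assumes "(h has_real_derivative h') (at b)"
  shows "((\<lambda>z. h (snd z)) has_derivative (\<lambda>v. h' * snd v)) (at (a, b))"
proof -
  have "(h has_real_derivative h') (at (snd (a, b)))" using assms by simp
  from DERIV_compose_FDERIV[OF this has_derivative_snd[OF has_derivative_ident]] show ?thesis
    by (simp add: mult.commute)
qed

lemma has_derivative_separable:
  assumes "(f has_real_derivative f') (at a)" "(h has_real_derivative h') (at b)"
  shows "((\<lambda>z. f (fst z) * h (snd z)) has_derivative (\<lambda>v. f' * h b * fst v + f a * h' * snd v)) (at (a, b))"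
  by (rule has_derivative_eq_rhs[OF has_derivative_mult[OF has_derivative_fst_comp[OF assms(1)]
        has_derivative_snd_comp[OF assms(2)]]])
     (auto simp: fun_eq_iff algebra_simps)

lemma q_rad_has_derivative:
  assumes "r > 0"
  shows "(q_rad \<gamma> c a has_derivative (\<lambda>v.
     (- 1 / r\<^sup>2 - cang c \<theta> / 2 + 3 * \<gamma> * r\<^sup>2 * aang a \<theta> / 4) * fst v
     + (- r * cang' c \<theta> / 2 + \<gamma> * r ^ 3 * aang' a \<theta> / 4) * snd v)) (at (r, \<theta>))"
proof -
  have d0: "((\<lambda>r. 1 / r) has_real_derivative - 1 / r\<^sup>2) (at r)"
    using assms by (auto intro!: derivative_eq_intros simp: power2_eq_square)
  have d1: "((\<lambda>r. r / 2) has_real_derivative 1 / 2) (at r)"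
    by (auto intro!: derivative_eq_intros)
  have d2: "((\<lambda>r. \<gamma> * r ^ 3 / 4) has_real_derivative 3 * \<gamma> * r\<^sup>2 / 4) (at r)"
    by (auto intro!: derivative_eq_intros simp: power2_eq_square)
  have "((\<lambda>z. 1 / fst z - (fst z / 2) * cang c (snd z) + (\<gamma> * fst z ^ 3 / 4) * aang a (snd z))
    has_derivative (\<lambda>v. - 1 / r\<^sup>2 * fst v - (1 / 2 * cang c \<theta> * fst v + r / 2 * cang' c \<theta> * snd v)
        + (3 * \<gamma> * r\<^sup>2 / 4 * aang a \<theta> * fst v + \<gamma> * r ^ 3 / 4 * aang' a \<theta> * snd v))) (at (r, \<theta>))"
    by (intro has_derivative_add has_derivative_diff has_derivative_fst_comp[OF d0]
        has_derivative_separable[OF d1 cang_has_derivative] has_derivative_separable[OF d2 aang_has_derivative])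
  then show ?thesis unfolding q_rad_def[abs_def]
    by (rule has_derivative_eq_rhs) (auto simp: fun_eq_iff algebra_simps)
qed

lemma q_ang_has_derivative:
  assumes "r > 0" and sin: "sin (sqrt 2 * \<theta>) \<noteq> 0"
  shows "(q_ang \<gamma> c a has_derivative (\<lambda>v.
     (- sqrt 2 * cot (sqrt 2 * \<theta>) / (2 * r\<^sup>2) - cang' c \<theta> / 4 + 3 * \<gamma> * r\<^sup>2 * aang' a \<theta> / 16) * fst v
     + (- 1 / (r * (sin (sqrt 2 * \<theta>))\<^sup>2) - r * cang'' c \<theta> / 4 + \<gamma> * r ^ 3 * aang'' a \<theta> / 16) * snd v))
     (at (r, \<theta>))"
proof -
  have d0: "((\<lambda>r. sqrt 2 / (2 * r)) has_real_derivative - sqrt 2 / (2 * r\<^sup>2)) (at r)"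
    using assms(1) by (auto intro!: derivative_eq_intros simp: power2_eq_square)
  have "((\<lambda>t. sqrt 2 * t) has_real_derivative sqrt 2) (at \<theta>)"
    by (auto intro!: derivative_eq_intros)
  from DERIV_chain2[OF DERIV_cot[OF sin] this]
  have dcot: "((\<lambda>t. cot (sqrt 2 * t)) has_real_derivative - sqrt 2 / (sin (sqrt 2 * \<theta>))\<^sup>2) (at \<theta>)"
    by (rule DERIV_cong) (simp add: field_simps)
  have d1: "((\<lambda>r. r / 4) has_real_derivative 1 / 4) (at r)"
    by (auto intro!: derivative_eq_intros)
  have d2: "((\<lambda>r. \<gamma> * r ^ 3 / 16) has_real_derivative 3 * \<gamma> * r\<^sup>2 / 16) (at r)"
    by (auto intro!: derivative_eq_intros simp: power2_eq_square)
  have "((\<lambda>z. (sqrt 2 / (2 * fst z)) * cot (sqrt 2 * snd z) - (fst z / 4) * cang' c (snd z)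
      + (\<gamma> * fst z ^ 3 / 16) * aang' a (snd z)) has_derivative
     (\<lambda>v. (- sqrt 2 / (2 * r\<^sup>2) * cot (sqrt 2 * \<theta>) * fst v
          + sqrt 2 / (2 * r) * (- sqrt 2 / (sin (sqrt 2 * \<theta>))\<^sup>2) * snd v)
        - (1 / 4 * cang' c \<theta> * fst v + r / 4 * cang'' c \<theta> * snd v)
        + (3 * \<gamma> * r\<^sup>2 / 16 * aang' a \<theta> * fst v + \<gamma> * r ^ 3 / 16 * aang'' a \<theta> * snd v))) (at (r, \<theta>))"
    by (intro has_derivative_add has_derivative_diff has_derivative_separable[OF d0 dcot]
        has_derivative_separable[OF d1 cang'_has_derivative] has_derivative_separable[OF d2 aang'_has_derivative])
  then show ?thesis unfolding q_ang_def[abs_def]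
    by (rule has_derivative_eq_rhs) (use assms in \<open>auto simp: fun_eq_iff algebra_simps\<close>)
qed


text \<open>Here \<open>c, s\<close> stand for \<open>cos \<theta>, sin \<theta>\<close>, \<open>w, S\<close> for \<open>cos (\<surd>2 \<theta>), sin (\<surd>2 \<theta>)\<close> and \<open>k\<close> for \<open>\<surd>2\<close>;
  the left-hand sides are the two components of \<open>- gen \<psi>\<close> at \<open>\<psi>(n, x)\<close>.\<close>
lemma generator_frame_identity:
  fixes r S \<gamma> n k C A C' A' c s w x BN BX P T :: real
  assumes "r \<noteq> 0" "S \<noteq> 0" "\<gamma> \<noteq> 0" "n = \<gamma> * r\<^sup>2 / 2" "k * k = 2" "x * (1 - x) = S\<^sup>2 / 4"
    and "BN = n * C - n\<^sup>2 * A" "BX = x * (1 - x) * (C' / 2 - n * A' / 4)"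
    and "P = 1 / r - (r / 2) * C + (\<gamma> * r ^ 3 / 4) * A"
    and "T = (k / (2 * r)) * (w / S) - (r / 4) * (C' * (- (k / 2) * S))
           + (\<gamma> * r ^ 3 / 16) * (A' * (- (k / 2) * S))"
  shows "- (BN * (1 / (\<gamma> * r) * c) + BX * (r * (k * s / S)) + \<gamma> * n * (- 1 / (\<gamma>\<^sup>2 * r ^ 3) * c)
            + \<gamma> * x * (1 - x) / (2 * n) * (r * (- 2 * c / S\<^sup>2 + 2 * k * w * s / S ^ 3)))
         = P * c - T * s"
    and "- (BN * (1 / (\<gamma> * r) * s) + BX * (r * (- k * c / S)) + \<gamma> * n * (- 1 / (\<gamma>\<^sup>2 * r ^ 3) * s)
            + \<gamma> * x * (1 - x) / (2 * n) * (r * (- 2 * s / S\<^sup>2 - 2 * k * w * c / S ^ 3)))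
         = P * s + T * c"
proof -
  have "\<gamma> * x * (1 - x) / (2 * n) = \<gamma> * (S\<^sup>2 / 4) / (2 * n)"
    by (simp only: mult.assoc assms(6))
  note eqs = this assms(7-10) assms(6)
  show "- (BN * (1 / (\<gamma> * r) * c) + BX * (r * (k * s / S)) + \<gamma> * n * (- 1 / (\<gamma>\<^sup>2 * r ^ 3) * c)
            + \<gamma> * x * (1 - x) / (2 * n) * (r * (- 2 * c / S\<^sup>2 + 2 * k * w * s / S ^ 3)))
         = P * c - T * s"
    unfolding eqs using assms(1-3,5) unfolding assms(4)
    by (simp add: field_simps power2_eq_square power3_eq_cube)
  show "- (BN * (1 / (\<gamma> * r) * s) + BX * (r * (- k * c / S)) + \<gamma> * n * (- 1 / (\<gamma>\<^sup>2 * r ^ 3) * s)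
            + \<gamma> * x * (1 - x) / (2 * n) * (r * (- 2 * s / S\<^sup>2 - 2 * k * w * c / S ^ 3)))
         = P * s + T * c"
    unfolding eqs using assms(1-3,5) unfolding assms(4)
    by (simp add: field_simps power2_eq_square power3_eq_cube)
qed

lemma xcoord_trig:
  assumes "0 < \<theta>" "\<theta> < pi / sqrt 2"
  shows "cphi (xcoord \<theta>) = cos \<theta>" "sphi (xcoord \<theta>) = sin \<theta>"
    and "sin_arc (xcoord \<theta>) = sin (sqrt 2 * \<theta>)" "2 * xcoord \<theta> - 1 = cos (sqrt 2 * \<theta>)"
proof -
  have a: "arccos (2 * xcoord \<theta> - 1) = sqrt 2 * \<theta>" using assms by (simp add: arccos_xcoord)
  then show "cphi (xcoord \<theta>) = cos \<theta>" "sphi (xcoord \<theta>) = sin \<theta>"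
    by (simp_all add: cphi_def sphi_def)
  show c: "2 * xcoord \<theta> - 1 = cos (sqrt 2 * \<theta>)" by (simp add: xcoord_def field_simps)
  have "0 < sqrt 2 * \<theta>" "sqrt 2 * \<theta> < pi"
    using assms by (simp_all add: less_divide_eq mult.commute)
  then have "0 \<le> sin (sqrt 2 * \<theta>)" by (simp add: sin_ge_zero)
  then show "sin_arc (xcoord \<theta>) = sin (sqrt 2 * \<theta>)"
    by (simp add: sin_arc_def c cos_squared_eq)
qed

lemma qfield_polar:
  fixes \<gamma> :: real
  assumes \<gamma>: "\<gamma> > 0" and sym: "\<alpha> 1 2 = \<alpha> 2 1" "\<alpha> 1 3 = \<alpha> 3 1" "\<alpha> 2 3 = \<alpha> 3 2"
    and s: "s \<in> interior Dom"
  shows "qfield \<gamma> \<beta> \<delta> \<alpha> s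
    = frame_field (q_rad \<gamma> (\<lambda>k. \<beta> k - \<delta> k) \<alpha>) (q_ang \<gamma> (\<lambda>k. \<beta> k - \<delta> k) \<alpha>) (polar s)"
proof -
  define c where "c = (\<lambda>k. \<beta> k - \<delta> k)"
  define r where "r = norm s"
  define \<theta> where "\<theta> = snd (polar s)"
  define x where "x = xcoord \<theta>"
  define n where "n = \<gamma> * r\<^sup>2 / 2"
  have r: "r > 0" using polar_upper_half_plane(1)[of s] s by (simp add: r_def mem_interior_Dom)
  note \<theta>_bounds = polar_angle_interior_Dom[OF s, folded \<theta>_def]
  note trig = xcoord_trig[OF \<theta>_bounds, folded x_def]
  have x: "0 < x" "x < 1" using xcoord_bounds[OF \<theta>_bounds] by (simp_all add: x_def)
  have S: "sin_arc x > 0" using sin_arc_pos[OF x] .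
  have n: "n > 0" using \<gamma> r by (simp add: n_def)
  have R: "radius \<gamma> n = r" using \<gamma> r by (simp add: radius_def n_def)
  have psi1_eq: "psi1 \<gamma> = (\<lambda>m y. radius \<gamma> m * cphi y)"
    by (simp add: fun_eq_iff psi1_def radius_def cphi_def)
  have psi2_eq: "psi2 \<gamma> = (\<lambda>m y. radius \<gamma> m * sphi y)"
    by (simp add: fun_eq_iff psi2_def radius_def sphi_def)
  have "(2 * x - 1)\<^sup>2 < 1" using x by (simp add: abs_square_less_1)
  then have "(sin_arc x)\<^sup>2 = 1 - (2 * x - 1)\<^sup>2" by (simp add: sin_arc_def)
  then have x_sin_arc: "x * (1 - x) = (sin_arc x)\<^sup>2 / 4" by (simp add: power2_eq_square algebra_simps)
  have P: "q_rad \<gamma> c \<alpha> (r, \<theta>) = 1 / r - (r / 2) * bern c x + (\<gamma> * r ^ 3 / 4) * qform \<alpha> x"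
    by (simp add: q_rad_def cang_def aang_def x_def)
  have T: "q_ang \<gamma> c \<alpha> (r, \<theta>) = (sqrt 2 / (2 * r)) * ((2 * x - 1) / sin_arc x)
      - (r / 4) * (bern' c x * (- (sqrt 2 / 2) * sin_arc x))
      + (\<gamma> * r ^ 3 / 16) * (qform' \<alpha> x * (- (sqrt 2 / 2) * sin_arc x))"
    using trig by (simp add: q_ang_def cang'_def aang'_def xcoord'_def cot_def x_def)
  note identity = generator_frame_identity[OF _ _ _ n_def _ x_sin_arc
      bN_eq[of \<beta> \<delta> \<alpha> n x, folded c_def] bX_eq[OF sym, of \<beta> \<delta> n x, folded c_def] P T]
  have "gen \<gamma> \<beta> \<delta> \<alpha> (psi1 \<gamma>) n x =
     bN \<beta> \<delta> \<alpha> n x * (1 / (\<gamma> * r) * cphi x) + bX \<beta> \<delta> \<alpha> n x * (r * cphi' x)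
     + \<gamma> * n * (- 1 / (\<gamma>\<^sup>2 * r ^ 3) * cphi x) + \<gamma> * x * (1 - x) / (2 * n) * (r * cphi'' x)"
    unfolding psi1_eq R[symmetric]
    by (rule gen_separable[OF \<gamma> n x cphi_has_derivative cphi'_has_derivative])
  then have "- gen \<gamma> \<beta> \<delta> \<alpha> (psi1 \<gamma>) n x = q_rad \<gamma> c \<alpha> (r, \<theta>) * cos \<theta> - q_ang \<gamma> c \<alpha> (r, \<theta>) * sin \<theta>"
    unfolding trig(1,2)[symmetric] cphi'_def cphi''_def
    using identity(1) r S \<gamma> by simp
  moreover have "gen \<gamma> \<beta> \<delta> \<alpha> (psi2 \<gamma>) n x =
     bN \<beta> \<delta> \<alpha> n x * (1 / (\<gamma> * r) * sphi x) + bX \<beta> \<delta> \<alpha> n x * (r * sphi' x)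
     + \<gamma> * n * (- 1 / (\<gamma>\<^sup>2 * r ^ 3) * sphi x) + \<gamma> * x * (1 - x) / (2 * n) * (r * sphi'' x)"
    unfolding psi2_eq R[symmetric]
    by (rule gen_separable[OF \<gamma> n x sphi_has_derivative sphi'_has_derivative])
  then have "- gen \<gamma> \<beta> \<delta> \<alpha> (psi2 \<gamma>) n x = q_rad \<gamma> c \<alpha> (r, \<theta>) * sin \<theta> + q_ang \<gamma> c \<alpha> (r, \<theta>) * cos \<theta>"
    unfolding trig(1,2)[symmetric] sphi'_def sphi''_def
    using identity(2) r S \<gamma> by simp
  moreover have "inv_into ({0<..} \<times> {0..1}) (psi \<gamma>) s = (n, x)"
    using inv_psi_interior_Dom[OF \<gamma> s] by (simp add: n_def r_def x_def \<theta>_def)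
  moreover have "polar s = (r, \<theta>)" by (simp add: polar_def r_def \<theta>_def)
  ultimately show ?thesis by (simp add: qfield_def frame_field_def c_def)
qed


section \<open>The lower bound for \<open>F\<close>\<close>

lemma norm_frame_field: "(norm (frame_field P T z))\<^sup>2 = (P z)\<^sup>2 + (T z)\<^sup>2"
proof -
  have "(norm (frame_field P T z))\<^sup>2
      = (P z * cos (snd z) - T z * sin (snd z))\<^sup>2 + (P z * sin (snd z) + T z * cos (snd z))\<^sup>2"
    by (simp add: frame_field_def norm_Pair)
  also have "\<dots> = ((P z)\<^sup>2 + (T z)\<^sup>2) * ((sin (snd z))\<^sup>2 + (cos (snd z))\<^sup>2)"
    by algebra
  also have "\<dots> = (P z)\<^sup>2 + (T z)\<^sup>2" by simp
  finally show ?thesis .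
qed

lemma Ffun_polar:
  fixes \<gamma> :: real and Q :: "real \<times> real \<Rightarrow> real"
  assumes \<gamma>: "\<gamma> > 0" and sym: "\<alpha> 1 2 = \<alpha> 2 1" "\<alpha> 1 3 = \<alpha> 3 1" "\<alpha> 2 3 = \<alpha> 3 2"
    and gradQ: "\<And>s. s \<in> interior Dom \<Longrightarrow> (Q has_derivative (\<lambda>h. qfield \<gamma> \<beta> \<delta> \<alpha> s \<bullet> h)) (at s)"
    and s: "s \<in> interior Dom" and r: "r = norm s" and \<theta>: "\<theta> = snd (polar s)"
  defines "c \<equiv> \<lambda>k. \<beta> k - \<delta> k"
  shows "Ffun Q s = 1 / r\<^sup>2 + (r * (\<gamma> * r\<^sup>2 * aang \<alpha> \<theta> / 4 - cang c \<theta> / 2))\<^sup>2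
      - \<gamma> * r\<^sup>2 * aang \<alpha> \<theta> / 2 + (q_ang \<gamma> c \<alpha> (r, \<theta>))\<^sup>2 + 1 / (r\<^sup>2 * (sin (sqrt 2 * \<theta>))\<^sup>2)
      + cang'' c \<theta> / 4 - \<gamma> * r\<^sup>2 * aang'' \<alpha> \<theta> / 16"
proof -
  define P where "P = q_rad \<gamma> c \<alpha>"
  define T where "T = q_ang \<gamma> c \<alpha>"
  have s2: "snd s > 0" using s by (simp add: mem_interior_Dom)
  have r0: "r > 0" using polar_upper_half_plane(1)[OF s2] by (simp add: r)
  have polar_s: "polar s = (r, \<theta>)" by (simp add: polar_def r \<theta>)
  have "0 < sqrt 2 * \<theta>" "sqrt 2 * \<theta> < pi"
    using polar_angle_interior_Dom[OF s] by (simp_all add: \<theta> less_divide_eq mult.commute)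
  then have S: "sin (sqrt 2 * \<theta>) > 0" by (rule sin_gt_zero)
  note dP = q_rad_has_derivative[OF r0, of \<gamma> c \<alpha> \<theta>, folded polar_s P_def]
  note dT = q_ang_has_derivative[OF r0 less_imp_neq[OF S, symmetric], of \<gamma> c \<alpha>, folded polar_s T_def]
  obtain E' where dE: "(frame_field P T \<circ> polar has_derivative E') (at s)"
    and div: "fst (E' (1, 0)) + snd (E' (0, 1)) = (- 1 / r\<^sup>2 - cang c \<theta> / 2 + 3 * \<gamma> * r\<^sup>2 * aang \<alpha> \<theta> / 4)
      + P (polar s) / norm s
      + (- 1 / (r * (sin (sqrt 2 * \<theta>))\<^sup>2) - r * cang'' c \<theta> / 4 + \<gamma> * r ^ 3 * aang'' \<alpha> \<theta> / 16) / norm s"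
    by (rule frame_field_polar_divergence[OF s2 dP dT])
  have gradE: "(Q has_derivative (\<lambda>h. (frame_field P T \<circ> polar) z \<bullet> h)) (at z)" if "z \<in> interior Dom" for z
    using gradQ[OF that] qfield_polar[OF \<gamma> sym that] by (simp add: P_def T_def c_def)
  note grad_lap = grad2_lap2_of_gradient_field[OF open_interior s gradE dE]
  have "Ffun Q s = (P (r, \<theta>))\<^sup>2 + (T (r, \<theta>))\<^sup>2 - (fst (E' (1, 0)) + snd (E' (0, 1)))"
    using grad_lap by (simp add: Ffun_def norm_frame_field polar_s)
  also have "\<dots> = 1 / r\<^sup>2 + (r * (\<gamma> * r\<^sup>2 * aang \<alpha> \<theta> / 4 - cang c \<theta> / 2))\<^sup>2
      - \<gamma> * r\<^sup>2 * aang \<alpha> \<theta> / 2 + (T (r, \<theta>))\<^sup>2 + 1 / (r\<^sup>2 * (sin (sqrt 2 * \<theta>))\<^sup>2)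
      + cang'' c \<theta> / 4 - \<gamma> * r\<^sup>2 * aang'' \<alpha> \<theta> / 16"
    unfolding div polar_s r[symmetric] using r0 S
    by (simp add: P_def q_rad_def field_simps power2_eq_square power3_eq_cube)
  finally show ?thesis by (simp add: T_def)
qed


definition bern_qform_bound :: "(nat \<Rightarrow> real) \<Rightarrow> (nat \<Rightarrow> nat \<Rightarrow> real) \<Rightarrow> real \<Rightarrow> bool" where
  "bern_qform_bound c a K \<longleftrightarrow> (\<forall>x\<in>{0..1}. \<bar>bern c x\<bar> \<le> K \<and> \<bar>bern' c x\<bar> \<le> K \<and> \<bar>bern'' c\<bar> \<le> K
      \<and> \<bar>qform a x\<bar> \<le> K \<and> \<bar>qform' a x\<bar> \<le> K \<and> \<bar>qform'' a x\<bar> \<le> K)"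

lemma bern_qform_bound_exists: "\<exists>K. bern_qform_bound c a K"
proof -
  define h where "h x = \<bar>bern c x\<bar> + \<bar>bern' c x\<bar> + \<bar>bern'' c\<bar> + \<bar>qform a x\<bar> + \<bar>qform' a x\<bar>
    + \<bar>qform'' a x\<bar>" for x
  have "continuous_on {0..1::real} h"
    unfolding h_def bern_def bern'_def bern''_def qform_def qform'_def qform''_def
    by (intro continuous_intros)
  then obtain x0 where x0: "\<forall>x\<in>{0..1}. h x \<le> h x0"
    using continuous_attains_sup[of "{0..1::real}" h] by auto
  have "bern_qform_bound c a (h x0)"
    unfolding bern_qform_bound_def
  proof
    fix x :: real assume "x \<in> {0..1}"
    then have "h x \<le> h x0" using x0 by blast
    moreover have "0 \<le> \<bar>bern c x\<bar>" "0 \<le> \<bar>bern' c x\<bar>" "0 \<le> \<bar>bern'' c\<bar>"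
      "0 \<le> \<bar>qform a x\<bar>" "0 \<le> \<bar>qform' a x\<bar>" "0 \<le> \<bar>qform'' a x\<bar>" by simp_all
    ultimately show "\<bar>bern c x\<bar> \<le> h x0 \<and> \<bar>bern' c x\<bar> \<le> h x0 \<and> \<bar>bern'' c\<bar> \<le> h x0
        \<and> \<bar>qform a x\<bar> \<le> h x0 \<and> \<bar>qform' a x\<bar> \<le> h x0 \<and> \<bar>qform'' a x\<bar> \<le> h x0"
      unfolding h_def[of x] by (intro conjI) linarith+
  qed
  then show ?thesis ..
qed

lemma qform_lower_bound_exists:
  assumes H1: "\<And>z :: nat \<Rightarrow> real. (\<forall>i\<in>{1..3}. z i \<ge> 0) \<Longrightarrow> (\<exists>i\<in>{1..3}. z i \<noteq> 0) \<Longrightarrow>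
               (\<Sum>i=1..3. \<Sum>j=1..3. a i j * z i * z j) > 0"
  shows "\<exists>m>0. \<forall>x\<in>{0..1}. m \<le> qform a x"
proof -
  have pos: "qform a x > 0" if x: "x \<in> {0..1}" for x
  proof -
    let ?z = "\<lambda>i::nat. if i = 1 then x\<^sup>2 else if i = 2 then 2 * x * (1 - x) else (1 - x)\<^sup>2"
    have "\<forall>i\<in>{1..3}. ?z i \<ge> 0" using x by auto
    moreover have "\<exists>i\<in>{1..3}. ?z i \<noteq> 0"
    proof (cases "x = 0")
      case True
      then show ?thesis by (intro bexI[of _ 3]) auto
    next
      case False
      then show ?thesis by (intro bexI[of _ 1]) auto
    qed
    ultimately have "(\<Sum>i=1..3. \<Sum>j=1..3. a i j * ?z i * ?z j) > 0" by (rule H1)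
    then show ?thesis by (simp add: qform_eq_quadratic_form[OF refl])
  qed
  have "continuous_on {0..1::real} (qform a)"
    unfolding qform_def bern_def by (intro continuous_intros)
  then obtain x0 where "x0 \<in> {0..1}" "\<forall>x\<in>{0..1}. qform a x0 \<le> qform a x"
    using continuous_attains_inf[of "{0..1::real}" "qform a"] by auto
  then show ?thesis using pos by blast
qed

lemma xcoord_in_unit_interval: "xcoord \<theta> \<in> {0..1}"
proof -
  define c where "c = cos (sqrt 2 * \<theta>)"
  have "- 1 \<le> c" "c \<le> 1" by (simp_all add: c_def)
  then show ?thesis by (simp add: xcoord_def c_def[symmetric])
qed

lemma xcoord_second_order_bound:
  assumes "\<bar>f''\<bar> \<le> K" "\<bar>f'\<bar> \<le> K"
  shows "\<bar>f'' * (xcoord' \<theta>)\<^sup>2 + f' * xcoord'' \<theta>\<bar> \<le> 2 * K"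
proof -
  have "(xcoord' \<theta>)\<^sup>2 = (sin (sqrt 2 * \<theta>))\<^sup>2 / 2" by (simp add: xcoord'_def power2_eq_square)
  moreover have "(sin (sqrt 2 * \<theta>))\<^sup>2 \<le> 1"
    using abs_square_le_1 abs_sin_le_one by blast
  ultimately have "(xcoord' \<theta>)\<^sup>2 \<le> 1" by linarith
  have K: "0 \<le> K" using assms(2) by linarith
  have "\<bar>f''\<bar> * (xcoord' \<theta>)\<^sup>2 \<le> K * 1"
    by (rule mult_mono) (use assms(1) \<open>(xcoord' \<theta>)\<^sup>2 \<le> 1\<close> K in auto)
  moreover have "\<bar>f'\<bar> * \<bar>xcoord'' \<theta>\<bar> \<le> K * 1"
    by (rule mult_mono) (use assms(2) K in \<open>auto simp: xcoord''_def\<close>)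
  moreover have "\<bar>f'' * (xcoord' \<theta>)\<^sup>2\<bar> = \<bar>f''\<bar> * (xcoord' \<theta>)\<^sup>2"
    "\<bar>f' * xcoord'' \<theta>\<bar> = \<bar>f'\<bar> * \<bar>xcoord'' \<theta>\<bar>" by (simp_all add: abs_mult)
  ultimately show ?thesis
    using abs_triangle_ineq[of "f'' * (xcoord' \<theta>)\<^sup>2" "f' * xcoord'' \<theta>"] by linarith
qed

lemma Ffun_polar_lower_bound:
  fixes \<gamma> r K m A C A2 C2 T W :: real
  assumes "\<gamma> > 0" "r > 0" "m > 0" "\<bar>C\<bar> \<le> K" "m \<le> A" "A \<le> K" "\<bar>C2\<bar> \<le> 2 * K" "\<bar>A2\<bar> \<le> 2 * K" "W \<ge> 0"
  shows "\<gamma>\<^sup>2 * m\<^sup>2 / 32 * r ^ 6 - (K\<^sup>2 / 4 + \<gamma> * K) * r\<^sup>2 - K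
    \<le> 1 / r\<^sup>2 + (r * (\<gamma> * r\<^sup>2 * A / 4 - C / 2))\<^sup>2 - \<gamma> * r\<^sup>2 * A / 2 + T\<^sup>2 + W + C2 / 4 - \<gamma> * r\<^sup>2 * A2 / 16"
proof -
  define u where "u = \<gamma> * r\<^sup>2 * A / 4"
  have K: "K \<ge> 0" using assms(4) by linarith
  have "\<gamma> * r\<^sup>2 * m / 4 \<le> u" "0 \<le> \<gamma> * r\<^sup>2 * m / 4"
    using assms(1-3,5) by (simp_all add: u_def)
  then have "(\<gamma> * r\<^sup>2 * m / 4)\<^sup>2 \<le> u\<^sup>2" by (rule power_mono)
  moreover have "(C / 2)\<^sup>2 \<le> K\<^sup>2 / 4"
    using assms(4) abs_le_square_iff[of C K] K by (simp add: power_divide)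
  moreover have "u\<^sup>2 / 2 - (C / 2)\<^sup>2 \<le> (u - C / 2)\<^sup>2"
    using zero_le_power2[of "u - C"] by (simp add: power2_eq_square algebra_simps)
  ultimately have "r\<^sup>2 * ((\<gamma> * r\<^sup>2 * m / 4)\<^sup>2 / 2 - K\<^sup>2 / 4) \<le> r\<^sup>2 * (u - C / 2)\<^sup>2"
    by (intro mult_left_mono) auto
  then have main: "\<gamma>\<^sup>2 * m\<^sup>2 / 32 * r ^ 6 - K\<^sup>2 / 4 * r\<^sup>2 \<le> (r * (u - C / 2))\<^sup>2"
    by (simp add: power_mult_distrib algebra_simps power2_eq_square power3_eq_cube
        numeral_eq_Suc)
  have A: "\<gamma> * r\<^sup>2 * A \<le> \<gamma> * r\<^sup>2 * K"
    using assms(1,6) by (simp add: mult_left_mono)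
  have "A2 \<le> 2 * K" using assms(8) by linarith
  then have A2: "\<gamma> * r\<^sup>2 * A2 \<le> \<gamma> * r\<^sup>2 * (2 * K)"
    by (rule mult_left_mono) (use assms(1) in simp)
  have nonneg: "0 \<le> \<gamma> * r\<^sup>2 * K" "0 \<le> 1 / r\<^sup>2" "0 \<le> T\<^sup>2"
    using assms(1) K by simp_all
  have "(K\<^sup>2 / 4 + \<gamma> * K) * r\<^sup>2 = K\<^sup>2 / 4 * r\<^sup>2 + \<gamma> * r\<^sup>2 * K"
    by (simp add: algebra_simps)
  with main[unfolded u_def] A A2 nonneg assms(7,9) K show ?thesis by linarith
qed


lemma Ffun_lower_bound:
  fixes \<gamma> :: real and Q :: "real \<times> real \<Rightarrow> real"
  assumes \<gamma>: "\<gamma> > 0"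
    and H1: "\<And>z :: nat \<Rightarrow> real. (\<forall>i\<in>{1..3}. z i \<ge> 0) \<Longrightarrow> (\<exists>i\<in>{1..3}. z i \<noteq> 0) \<Longrightarrow>
               (\<Sum>i=1..3. \<Sum>j=1..3. \<alpha> i j * z i * z j) > 0"
    and sym: "\<alpha> 1 2 = \<alpha> 2 1" "\<alpha> 1 3 = \<alpha> 3 1" "\<alpha> 2 3 = \<alpha> 3 2"
    and gradQ: "\<And>s. s \<in> interior Dom \<Longrightarrow> (Q has_derivative (\<lambda>h. qfield \<gamma> \<beta> \<delta> \<alpha> s \<bullet> h)) (at s)"
  obtains a b c where "a > 0"
    and "\<And>s. s \<in> interior Dom \<Longrightarrow> a * norm s ^ 6 - b * (norm s)\<^sup>2 - c \<le> Ffun Q s"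
proof -
  define c where "c = (\<lambda>k. \<beta> k - \<delta> k)"
  obtain K where K: "bern_qform_bound c \<alpha> K" using bern_qform_bound_exists by blast
  obtain m where m: "m > 0" "\<forall>x\<in>{0..1}. m \<le> qform \<alpha> x" using qform_lower_bound_exists[OF H1] by blast
  show ?thesis
  proof (rule that[of "\<gamma>\<^sup>2 * m\<^sup>2 / 32" "K\<^sup>2 / 4 + \<gamma> * K" K])
    show "\<gamma>\<^sup>2 * m\<^sup>2 / 32 > 0" using \<gamma> m by simp
    fix s assume s: "s \<in> interior Dom"
    define r where "r = norm s"
    define \<theta> where "\<theta> = snd (polar s)"
    have r: "r > 0" using polar_upper_half_plane(1)[of s] s by (simp add: r_def mem_interior_Dom)
    have K\<theta>: "\<bar>bern c (xcoord \<theta>)\<bar> \<le> K \<and> \<bar>bern' c (xcoord \<theta>)\<bar> \<le> K \<and> \<bar>bern'' c\<bar> \<le> K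
        \<and> \<bar>qform \<alpha> (xcoord \<theta>)\<bar> \<le> K \<and> \<bar>qform' \<alpha> (xcoord \<theta>)\<bar> \<le> K \<and> \<bar>qform'' \<alpha> (xcoord \<theta>)\<bar> \<le> K"
      using K xcoord_in_unit_interval unfolding bern_qform_bound_def by blast
    have "\<gamma>\<^sup>2 * m\<^sup>2 / 32 * r ^ 6 - (K\<^sup>2 / 4 + \<gamma> * K) * r\<^sup>2 - K
      \<le> 1 / r\<^sup>2 + (r * (\<gamma> * r\<^sup>2 * aang \<alpha> \<theta> / 4 - cang c \<theta> / 2))\<^sup>2 - \<gamma> * r\<^sup>2 * aang \<alpha> \<theta> / 2
        + (q_ang \<gamma> c \<alpha> (r, \<theta>))\<^sup>2 + 1 / (r\<^sup>2 * (sin (sqrt 2 * \<theta>))\<^sup>2)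
        + cang'' c \<theta> / 4 - \<gamma> * r\<^sup>2 * aang'' \<alpha> \<theta> / 16"
    proof (rule Ffun_polar_lower_bound[OF \<gamma> r m(1)])
      show "\<bar>cang c \<theta>\<bar> \<le> K" "aang \<alpha> \<theta> \<le> K" using K\<theta> by (auto simp: cang_def aang_def)
      show "m \<le> aang \<alpha> \<theta>" using m(2) xcoord_in_unit_interval by (simp add: aang_def)
      show "\<bar>cang'' c \<theta>\<bar> \<le> 2 * K" "\<bar>aang'' \<alpha> \<theta>\<bar> \<le> 2 * K"
        unfolding cang''_def aang''_def using K\<theta> by (auto intro!: xcoord_second_order_bound)
    qed simp
    then show "\<gamma>\<^sup>2 * m\<^sup>2 / 32 * norm s ^ 6 - (K\<^sup>2 / 4 + \<gamma> * K) * (norm s)\<^sup>2 - K \<le> Ffun Q s"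
      using Ffun_polar[OF \<gamma> sym gradQ s r_def \<theta>_def] by (simp add: r_def c_def)
  qed
qed

lemma continuous_at_top_imp_bounded_below:
  fixes B :: "real \<Rightarrow> real"
  assumes "continuous_on {0..} B" and "filterlim B at_top at_top"
  obtains C where "\<And>t. 0 \<le> t \<Longrightarrow> C \<le> B t"
proof -
  obtain N where N: "\<And>t. N \<le> t \<Longrightarrow> 0 \<le> B t"
    using assms(2) unfolding filterlim_at_top eventually_at_top_linorder by blast
  have "continuous_on {0..max 0 N} B" using assms(1) by (rule continuous_on_subset) auto
  then obtain t0 where t0: "\<forall>t\<in>{0..max 0 N}. B t0 \<le> B t"
    using continuous_attains_inf[of "{0..max 0 N}" B] by auto
  then have "min (B t0) 0 \<le> B t" if "0 \<le> t" for t
  proof (cases "t \<le> max 0 N")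
    case True
    then show ?thesis using t0 that by (simp add: min.coboundedI1)
  next
    case False
    then show ?thesis using N[of t] by (simp add: min.coboundedI2)
  qed
  then show ?thesis by (rule that)
qed

lemma Inf_tail_tendsto_at_top:
  fixes f :: "'a :: real_normed_vector \<Rightarrow> real" and B :: "real \<Rightarrow> real"
  assumes bound: "\<And>s. s \<in> S \<Longrightarrow> B (norm s) \<le> f s" and lim: "filterlim B at_top at_top"
    and unbounded: "\<And>R. \<exists>s\<in>S. R \<le> norm s"
  shows "filterlim (\<lambda>R. Inf (f ` {s \<in> S. norm s \<ge> R})) at_top at_top"
  unfolding filterlim_at_top
proof
  fix Z :: real
  obtain N where N: "\<And>t. N \<le> t \<Longrightarrow> Z \<le> B t"
    using lim unfolding filterlim_at_top eventually_at_top_linorder by blast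
  show "\<forall>\<^sub>F R in at_top. Z \<le> Inf (f ` {s \<in> S. norm s \<ge> R})"
    using eventually_ge_at_top[of N]
  proof eventually_elim
    case (elim R)
    have "f ` {s \<in> S. norm s \<ge> R} \<noteq> {}" using unbounded[of R] by blast
    then show ?case
    proof (rule cInf_greatest)
      fix v assume "v \<in> f ` {s \<in> S. R \<le> norm s}"
      then obtain s where "s \<in> S" "R \<le> norm s" "v = f s" by blast
      then show "Z \<le> v" using N[of "norm s"] bound[of s] elim by linarith
    qed
  qed
qed

theorem mainTheorem14:
  fixes \<gamma> :: real and \<beta> \<delta> :: "nat \<Rightarrow> real" and \<alpha> :: "nat \<Rightarrow> nat \<Rightarrow> real"
    and Q :: "real \<times> real \<Rightarrow> real"
  assumes gamma_pos: "\<gamma> > 0"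
    and H1: "\<And>z :: nat \<Rightarrow> real. (\<forall>i\<in>{1..3}. z i \<ge> 0) \<Longrightarrow> (\<exists>i\<in>{1..3}. z i \<noteq> 0) \<Longrightarrow>
               (\<Sum>i=1..3. \<Sum>j=1..3. \<alpha> i j * z i * z j) > 0"
    and sym: "\<And>i j. i \<in> {1..3} \<Longrightarrow> j \<in> {1..3} \<Longrightarrow> \<alpha> i j = \<alpha> j i"
    and gradQ: "\<And>s. s \<in> interior Dom \<Longrightarrow>
               (Q has_derivative (\<lambda>h. qfield \<gamma> \<beta> \<delta> \<alpha> s \<bullet> h)) (at s)"
  shows "(\<exists>C. \<forall>s\<in>interior Dom. Ffun Q s \<ge> C)
       \<and> filterlim (\<lambda>R. Inf (Ffun Q ` {s \<in> interior Dom. norm s \<ge> R})) at_top at_top"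
proof -
  obtain a b c where a: "a > 0"
    and bound: "\<And>s. s \<in> interior Dom \<Longrightarrow> a * norm s ^ 6 - b * (norm s)\<^sup>2 - c \<le> Ffun Q s"
    using Ffun_lower_bound[OF gamma_pos H1 _ _ _ gradQ] sym by auto
  define B where "B t = a * t ^ 6 - b * t\<^sup>2 - c" for t :: real
  have lim: "filterlim B at_top at_top" unfolding B_def using a by real_asymp
  have "continuous_on {0..} B" unfolding B_def by (intro continuous_intros)
  then obtain C where C: "\<And>t. 0 \<le> t \<Longrightarrow> C \<le> B t"
    using continuous_at_top_imp_bounded_below lim by blast
  have unbounded: "\<exists>s\<in>interior Dom. R \<le> norm s" for R
    by (rule bexI[of _ "(0, \<bar>R\<bar> + 1)"]) (auto simp: mem_interior_Dom norm_Pair)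
  show ?thesis
    using C bound Inf_tail_tendsto_at_top[OF _ lim unbounded] unfolding B_def
    by (meson norm_ge_zero order_trans)
qed

end
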